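(* If $\varphi\in\mathrm{sHML}_F$ (resp. $\varphi\in\mathrm{cHML}_F$) is closed, then there is some $\psi\in\mathrm{sHML}$ (resp. $\psi\in\mathrm{cHML}$) such that $[\![\psi]\!]_F=[\![\varphi]\!]_F$.
   Context: Fix a finite set $\mathrm{Act}$ of actions. recHML formulae: $\varphi::=\mathrm{tt}\mid\mathrm{ff}\mid\varphi\vee\varphi\mid\varphi\wedge\varphi\mid\langle A\rangle\varphi\mid[A]\varphi\mid\min X.\varphi\mid\max X.\varphi\mid X$ ($A\subseteq\mathrm{Act}$), guarded. Fragments: $\mathrm{sHML}_F$: $\varphi::=\mathrm{tt}\mid\mathrm{ff}\mid[A]\varphi\mid\varphi\vee\varphi\mid\varphi\wedge\varphi\mid\max X.\varphi\mid X$; $\mathrm{cHML}_F$: $\varphi::=\mathrm{tt}\mid\mathrm{ff}\mid\langle A\rangle\varphi\mid\varphi\vee\varphi\mid\varphi\wedge\varphi\mid\min X.\varphi\mid X$; $\mathrm{sHML}$: $\varphi::=\mathrm{tt}\mid\mathrm{ff}\mid[A]\varphi\mid\varphi\wedge\varphi\mid\max X.\varphi\mid X$; $\mathrm{cHML}$: $\varphi::=\mathrm{tt}\mid\mathrm{ff}\mid\langle A\rangle\varphi\mid\varphi\vee\varphi\mid\min X.\varphi\mid X$. Finfinite traces $\mathrm{Fin}=\mathrm{Act}^\omega\cup\mathrm{Act}^*$; finfinite semantics: $[\![\mathrm{tt}]\!]_F=\mathrm{Fin}$, $[\![\mathrm{ff}]\!]_F=\emptyset$, $\vee,\wedge$ union/intersection,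 $[\![\langle A\rangle\varphi,\sigma]\!]_F=\{ag\mid a\in A,g\in[\![\varphi,\sigma]\!]_F\}$, $[\![[A]\varphi,\sigma]\!]_F=\{g\mid\forall a\in A,\forall g'.\ g=ag'\Rightarrow g'\in[\![\varphi,\sigma]\!]_F\}$, $\min/\max$ as least/greatest fixpoints, $[\![X,\sigma]\!]_F=\sigma(X)$. *)

theory Defs
  imports Main
begin

datatype 'a fintr = FinT "'a list" | InfT "nat \<Rightarrow> 'a"

fun tcons :: "'a \<Rightarrow> 'a fintr \<Rightarrow> 'a fintr" where
  "tcons a (FinT l) = FinT (a # l)"
| "tcons a (InfT f) = InfT (case_nat a f)"

datatype 'a form =
    TT | FF
  | Or "'a form" "'a form"
  | And "'a form" "'a form"
  | Dia "'a set" "'a form"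
  | Box "'a set" "'a form"
  | Min nat "'a form"
  | Max nat "'a form"
  | Var nat

primrec sem :: "'a form \<Rightarrow> (nat \<Rightarrow> 'a fintr set) \<Rightarrow> 'a fintr set" where
  "sem TT \<sigma> = UNIV"
| "sem FF \<sigma> = {}"
| "sem (Or p q) \<sigma> = sem p \<sigma> \<union> sem q \<sigma>"
| "sem (And p q) \<sigma> = sem p \<sigma> \<inter> sem q \<sigma>"
| "sem (Dia A p) \<sigma> = {tcons a g | a g. a \<in> A \<and> g \<in> sem p \<sigma>}"
| "sem (Box A p) \<sigma> = {g. \<forall>a\<in>A. \<forall>g'. g = tcons a g' \<longrightarrow> g' \<in> sem p \<sigma>}"
| "sem (Min X p) \<sigma> = lfp (\<lambda>S. sem p (\<sigma>(X := S)))"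
| "sem (Max X p) \<sigma> = gfp (\<lambda>S. sem p (\<sigma>(X := S)))"
| "sem (Var X) \<sigma> = \<sigma> X"

primrec fv :: "'a form \<Rightarrow> nat set" where
  "fv TT = {}" | "fv FF = {}"
| "fv (Or p q) = fv p \<union> fv q" | "fv (And p q) = fv p \<union> fv q"
| "fv (Dia A p) = fv p" | "fv (Box A p) = fv p"
| "fv (Min X p) = fv p - {X}" | "fv (Max X p) = fv p - {X}"
| "fv (Var X) = {X}"

definition closed :: "'a form \<Rightarrow> bool" where
  "closed p \<longleftrightarrow> fv p = {}"

primrec guarded_var :: "nat \<Rightarrow> 'a form \<Rightarrow> bool" where
  "guarded_var X TT = True" | "guarded_var X FF = True"
| "guarded_var X (Or p q) = (guarded_var X p \<and> guarded_var X q)"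
| "guarded_var X (And p q) = (guarded_var X p \<and> guarded_var X q)"
| "guarded_var X (Dia A p) = True" | "guarded_var X (Box A p) = True"
| "guarded_var X (Min Y p) = (Y = X \<or> guarded_var X p)"
| "guarded_var X (Max Y p) = (Y = X \<or> guarded_var X p)"
| "guarded_var X (Var Y) = (Y \<noteq> X)"

primrec guarded :: "'a form \<Rightarrow> bool" where
  "guarded TT = True" | "guarded FF = True"
| "guarded (Or p q) = (guarded p \<and> guarded q)"
| "guarded (And p q) = (guarded p \<and> guarded q)"
| "guarded (Dia A p) = guarded p" | "guarded (Box A p) = guarded p"
| "guarded (Min X p) = (guarded_var X p \<and> guarded p)"
| "guarded (Max X p) = (guarded_var X p \<and> guarded p)"
| "guarded (Var X) = True"

primrec sHML_F :: "'a form \<Rightarrow> bool" where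
  "sHML_F TT = True" | "sHML_F FF = True"
| "sHML_F (Or p q) = (sHML_F p \<and> sHML_F q)"
| "sHML_F (And p q) = (sHML_F p \<and> sHML_F q)"
| "sHML_F (Dia A p) = False" | "sHML_F (Box A p) = sHML_F p"
| "sHML_F (Min X p) = False" | "sHML_F (Max X p) = sHML_F p"
| "sHML_F (Var X) = True"

primrec cHML_F :: "'a form \<Rightarrow> bool" where
  "cHML_F TT = True" | "cHML_F FF = True"
| "cHML_F (Or p q) = (cHML_F p \<and> cHML_F q)"
| "cHML_F (And p q) = (cHML_F p \<and> cHML_F q)"
| "cHML_F (Dia A p) = cHML_F p" | "cHML_F (Box A p) = False"
| "cHML_F (Min X p) = cHML_F p" | "cHML_F (Max X p) = False"
| "cHML_F (Var X) = True"

primrec sHML :: "'a form \<Rightarrow> bool" where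
  "sHML TT = True" | "sHML FF = True"
| "sHML (Or p q) = False"
| "sHML (And p q) = (sHML p \<and> sHML q)"
| "sHML (Dia A p) = False" | "sHML (Box A p) = sHML p"
| "sHML (Min X p) = False" | "sHML (Max X p) = sHML p"
| "sHML (Var X) = True"

primrec cHML :: "'a form \<Rightarrow> bool" where
  "cHML TT = True" | "cHML FF = True"
| "cHML (Or p q) = (cHML p \<and> cHML q)"
| "cHML (And p q) = False"
| "cHML (Dia A p) = cHML p" | "cHML (Box A p) = False"
| "cHML (Min X p) = cHML p" | "cHML (Max X p) = False"
| "cHML (Var X) = True"

text \<open>Semantics of closed formulae (the environment is irrelevant for them).\<close>
definition semF :: "'a form \<Rightarrow> 'a fintr set" where
  "semF p = sem p (\<lambda>_. {})"

end

theory Submission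
  imports Defs
begin

text \<open>An \<open>sHML\<^sub>F\<close> formula denotes a safety property: a set of traces that contains
exactly those traces all of whose finite prefixes it contains. Every operator of \<open>sHML\<^sub>F\<close>
preserves this, greatest fixpoints because safety properties are closed under arbitrary
intersections. For a closed guarded formula the denotation moreover has only finitely many
derivatives: they all lie in the finite lattice generated by the denotations of the box
subformulas, taken in the environments reached by unfolding every fixpoint once. A safety
property \<open>S\<close> with finitely many derivatives is the denotation of the characteristic \<open>sHML\<close>
formula of its derivative automaton, \<open>X\<^sub>S = max X\<^sub>S. \<And>\<^sub>a [a] X\<^bsub>Deriv a S\<^esub>\<close>.
The \<open>cHML\<^sub>F\<close> case follows by negation duality.\<close>

lemma all_nat_split: "(\<forall>k. P k) \<longleftrightarrow> P 0 \<and> (\<forall>k. P (Suc k))"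
  by (metis not0_implies_Suc)

lemma case_nat_eq_case_nat_iff: "case_nat a f = case_nat b h \<longleftrightarrow> a = b \<and> f = h"
  by (metis nat.case fun_eq_iff)

lemma tcons_eq_tcons_iff [simp]: "tcons a g = tcons b h \<longleftrightarrow> a = b \<and> g = h"
  by (cases g; cases h) (simp_all add: case_nat_eq_case_nat_iff)

lemma FinT_Cons_eq_tcons_iff [simp]: "FinT (a # l) = tcons b h \<longleftrightarrow> a = b \<and> h = FinT l"
  by (cases h) auto

lemma tcons_neq_FinT_Nil [simp]: "tcons a g \<noteq> FinT []" "FinT [] \<noteq> tcons a g"
  by (cases g; simp)+

lemma trace_cases:
  obtains "g = FinT []" | a h where "g = tcons a h"
proof (cases g)
  case (FinT l)
  then show ?thesis using that by (cases l) auto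
next
  case (InfT f)
  then have "g = tcons (f 0) (InfT (f \<circ> Suc))"
    by (simp add: fun_eq_iff split: nat.split)
  then show ?thesis using that by blast
qed

fun tprefix :: "nat \<Rightarrow> 'a fintr \<Rightarrow> 'a list" where
  "tprefix k (FinT l) = take k l"
| "tprefix k (InfT f) = map f [0..<k]"

lemma tprefix_0 [simp]: "tprefix 0 g = []"
  by (cases g) auto

lemma tprefix_Suc_tcons [simp]: "tprefix (Suc k) (tcons a g) = a # tprefix k g"
  by (cases g) (simp_all add: map_upt_Suc del: upt_Suc)

lemma tprefix_tprefix: "j \<le> k \<Longrightarrow> tprefix j (FinT (tprefix k g)) = tprefix j g"
  by (cases g) (auto simp: min_def take_map)

definition Deriv :: "'a \<Rightarrow> 'a fintr set \<Rightarrow> 'a fintr set" where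
  "Deriv a S = {g. tcons a g \<in> S}"

lemma Deriv_simps [simp]:
  "Deriv a UNIV = UNIV" "Deriv a {} = {}"
  "Deriv a (S \<union> T) = Deriv a S \<union> Deriv a T" "Deriv a (S \<inter> T) = Deriv a S \<inter> Deriv a T"
  by (auto simp: Deriv_def)

lemma Deriv_box: "Deriv a {g. \<forall>b\<in>A. \<forall>h. g = tcons b h \<longrightarrow> h \<in> S} = (if a \<in> A then S else UNIV)"
  by (auto simp: Deriv_def)

definition safety :: "'a fintr set \<Rightarrow> bool" where
  "safety S \<longleftrightarrow> (\<forall>g. g \<in> S \<longleftrightarrow> (\<forall>k. FinT (tprefix k g) \<in> S))"

lemma safetyD: "safety S \<Longrightarrow> g \<in> S \<Longrightarrow> FinT (tprefix k g) \<in> S"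
  unfolding safety_def by blast

lemma safetyI:
  assumes "\<And>g k. g \<in> S \<Longrightarrow> FinT (tprefix k g) \<in> S"
    and "\<And>g. (\<And>k. FinT (tprefix k g) \<in> S) \<Longrightarrow> g \<in> S"
  shows "safety S"
  unfolding safety_def using assms by blast

lemma safety_memI: "safety S \<Longrightarrow> (\<And>k. FinT (tprefix k g) \<in> S) \<Longrightarrow> g \<in> S"
  unfolding safety_def by blast

lemma safety_tprefix_mono:
  "safety S \<Longrightarrow> FinT (tprefix k g) \<in> S \<Longrightarrow> j \<le> k \<Longrightarrow> FinT (tprefix j g) \<in> S"
  using safetyD[of S "FinT (tprefix k g)" j] tprefix_tprefix[of j k g] by simp

lemma safety_empty: "safety {}" and safety_UNIV: "safety UNIV"
  by (simp_all add: safety_def)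

lemma safety_Inter: "(\<And>S. S \<in> \<S> \<Longrightarrow> safety S) \<Longrightarrow> safety (\<Inter>\<S>)"
  by (rule safetyI) (meson InterD InterI safety_memI safetyD)+

lemma safety_Un:
  assumes S: "safety S" and T: "safety T"
  shows "safety (S \<union> T)"
proof (rule safetyI)
  fix g k assume "g \<in> S \<union> T"
  then show "FinT (tprefix k g) \<in> S \<union> T"
    using safetyD[OF S] safetyD[OF T] by blast
next
  fix g assume prefixes: "\<And>k. FinT (tprefix k g) \<in> S \<union> T"
  show "g \<in> S \<union> T"
  proof (rule ccontr)
    assume "g \<notin> S \<union> T"
    then obtain i j where "FinT (tprefix i g) \<notin> S" "FinT (tprefix j g) \<notin> T"
      using safety_memI[OF S, of g] safety_memI[OF T, of g] by blast
    then show False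
      using prefixes[of "max i j"] safety_tprefix_mono[OF S, of "max i j" g i]
        safety_tprefix_mono[OF T, of "max i j" g j]
      by auto
  qed
qed

lemma safety_box:
  assumes "safety S"
  shows "safety {g. \<forall>a\<in>A. \<forall>h. g = tcons a h \<longrightarrow> h \<in> S}"
  unfolding safety_def
proof
  fix g
  show "g \<in> {g. \<forall>a\<in>A. \<forall>h. g = tcons a h \<longrightarrow> h \<in> S} \<longleftrightarrow>
      (\<forall>k. FinT (tprefix k g) \<in> {g. \<forall>a\<in>A. \<forall>h. g = tcons a h \<longrightarrow> h \<in> S})"
  proof (cases g rule: trace_cases)
    case (2 a h)
    have "h \<in> S \<longleftrightarrow> (\<forall>k. FinT (tprefix k h) \<in> S)"
      using safetyD[OF assms] safety_memI[OF assms] by blast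
    then show ?thesis
      using 2 by (subst all_nat_split) auto
  qed simp
qed

lemma safety_Deriv:
  assumes S: "safety S"
  shows "safety (Deriv a S)"
proof (rule safetyI)
  fix g k assume "g \<in> Deriv a S"
  then show "FinT (tprefix k g) \<in> Deriv a S"
    using safetyD[OF S, of "tcons a g" "Suc k"] by (simp add: Deriv_def)
next
  fix g assume prefixes: "\<And>k. FinT (tprefix k g) \<in> Deriv a S"
  then have "FinT [] \<in> S"
    using safetyD[OF S, of "FinT [a]" 0] prefixes[of 0] by (simp add: Deriv_def)
  with prefixes have "\<forall>k. FinT (tprefix k (tcons a g)) \<in> S"
    by (subst all_nat_split) (simp add: Deriv_def)
  then show "g \<in> Deriv a S"
    unfolding Deriv_def by (blast intro: safety_memI[OF S])
qed

lemma safety_fold_Deriv: "safety S \<Longrightarrow> safety (fold Deriv w S)"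
  by (induction w arbitrary: S) (auto intro: safety_Deriv)

lemma sem_mono: "(\<And>X. \<sigma> X \<subseteq> \<sigma>' X) \<Longrightarrow> sem p \<sigma> \<subseteq> sem p \<sigma>'"
proof (induction p arbitrary: \<sigma> \<sigma>')
  case (Or p q)
  then show ?case by (metis Un_mono sem.simps(3))
next
  case (And p q)
  then show ?case by (metis Int_mono sem.simps(4))
next
  case (Dia A p)
  then show ?case by simp blast
next
  case (Box A p)
  then show ?case by simp blast
next
  case (Min X p)
  then show ?case by simp (rule lfp_mono, rule Min.IH, simp)
next
  case (Max X p)
  then show ?case by simp (rule gfp_mono, rule Max.IH, simp)
qed auto

lemma mono_sem_upd: "mono (\<lambda>S. sem p (\<sigma>(X := S)))"
  by (rule monoI) (rule sem_mono, simp)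

lemma sem_Max_unfold: "sem (Max X p) \<sigma> = sem p (\<sigma>(X := sem (Max X p) \<sigma>))"
  by (simp add: gfp_unfold[OF mono_sem_upd, symmetric])

lemma sem_fv_cong: "(\<And>X. X \<in> fv p \<Longrightarrow> \<sigma> X = \<sigma>' X) \<Longrightarrow> sem p \<sigma> = sem p \<sigma>'"
proof (induction p arbitrary: \<sigma> \<sigma>')
  case (Or p q)
  have "sem p \<sigma> = sem p \<sigma>'" "sem q \<sigma> = sem q \<sigma>'" by (rule Or.IH; use Or.prems in simp)+
  then show ?case by simp
next
  case (And p q)
  have "sem p \<sigma> = sem p \<sigma>'" "sem q \<sigma> = sem q \<sigma>'" by (rule And.IH; use And.prems in simp)+
  then show ?case by simp
next
  case (Dia A p)
  have "sem p \<sigma> = sem p \<sigma>'" by (rule Dia.IH; use Dia.prems in simp)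
  then show ?case by simp
next
  case (Box A p)
  have "sem p \<sigma> = sem p \<sigma>'" by (rule Box.IH; use Box.prems in simp)
  then show ?case by simp
next
  case (Min X p)
  have "\<And>S. sem p (\<sigma>(X := S)) = sem p (\<sigma>'(X := S))" by (rule Min.IH) (use Min.prems in auto)
  then show ?case by simp
next
  case (Max X p)
  have "\<And>S. sem p (\<sigma>(X := S)) = sem p (\<sigma>'(X := S))" by (rule Max.IH) (use Max.prems in auto)
  then show ?case by simp
next
  case (Var X) then show ?case by simp
qed simp_all

lemma sem_safety: "sHML_F p \<Longrightarrow> (\<And>X. safety (\<sigma> X)) \<Longrightarrow> safety (sem p \<sigma>)"
proof (induction p arbitrary: \<sigma>)
  case (And p q)
  then show ?case using safety_Inter[of "{sem p \<sigma>, sem q \<sigma>}"] by auto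
next
  case (Max X p)
  show ?case unfolding sem.simps
  proof (induction rule: gfp_ordinal_induct)
    case (step S)
    then show ?case using Max by simp
  qed (simp_all add: mono_sem_upd safety_Inter)
qed (simp_all add: safety_empty safety_UNIV safety_Un safety_box)

definition viable :: "nat \<Rightarrow> 'a fintr set \<Rightarrow> 'a fintr set" where
  "viable k S = {g. FinT (tprefix k g) \<in> S}"

lemma safety_FinT_Nil: "safety S \<Longrightarrow> S \<noteq> {} \<Longrightarrow> FinT [] \<in> S"
  using safetyD[of S _ 0] by auto

lemma viable_0: "safety S \<Longrightarrow> S \<noteq> {} \<Longrightarrow> viable 0 S = UNIV"
  by (simp add: viable_def safety_FinT_Nil)

lemma viable_Suc_subset: "safety S \<Longrightarrow> viable (Suc k) S \<subseteq> viable k S"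
  unfolding viable_def using safety_tprefix_mono[of S "Suc k" _ k] by auto

lemma viable_SucI:
  assumes "safety S" "S \<noteq> {}" and "\<And>a h. g = tcons a h \<Longrightarrow> h \<in> viable k (Deriv a S)"
  shows "g \<in> viable (Suc k) S"
proof (cases g rule: trace_cases)
  case 1
  then show ?thesis using safety_FinT_Nil[OF assms(1,2)] by (simp add: viable_def)
next
  case (2 a h)
  then show ?thesis using assms(3) by (simp add: viable_def Deriv_def)
qed

definition conj_list :: "'a form list \<Rightarrow> 'a form" where
  "conj_list ps = foldr And ps TT"

lemma sem_conj_list [simp]: "sem (conj_list ps) \<sigma> = (\<Inter>p\<in>set ps. sem p \<sigma>)"
  unfolding conj_list_def by (induction ps) auto

lemma sHML_conj_list: "(\<And>p. p \<in> set ps \<Longrightarrow> sHML p) \<Longrightarrow> sHML (conj_list ps)"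
  unfolding conj_list_def by (induction ps) auto

lemma guarded_conj_list: "(\<And>p. p \<in> set ps \<Longrightarrow> guarded p) \<Longrightarrow> guarded (conj_list ps)"
  unfolding conj_list_def by (induction ps) auto

lemma guarded_var_conj_list: "(\<And>p. p \<in> set ps \<Longrightarrow> guarded_var X p) \<Longrightarrow> guarded_var X (conj_list ps)"
  unfolding conj_list_def by (induction ps) auto

lemma fv_conj_list [simp]: "fv (conj_list ps) = (\<Union>p\<in>set ps. fv p)"
  unfolding conj_list_def by (induction ps) auto

text \<open>The characteristic formula of the derivative automaton from state \<open>S\<close>: the variable
\<open>idx S\<close> is bound by \<open>max idx S. \<And>\<^sub>a [a] (char_form \<dots> (Deriv a S))\<close>, and states in \<open>V\<close>, whose
variables are already bound further out, become variables. The fuel \<open>n\<close> only runs out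
(producing the junk value \<open>TT\<close>) if it is smaller than the number of states not in \<open>V\<close>.\<close>

primrec char_form ::
  "'a list \<Rightarrow> ('a fintr set \<Rightarrow> nat) \<Rightarrow> nat \<Rightarrow> 'a fintr set set \<Rightarrow> 'a fintr set \<Rightarrow> 'a form"
where
  "char_form acts idx 0 V S = (if S = {} then FF else if S \<in> V then Var (idx S) else TT)"
| "char_form acts idx (Suc n) V S = (if S = {} then FF else if S \<in> V then Var (idx S) else
     Max (idx S) (conj_list (map (\<lambda>a. Box {a} (char_form acts idx n (insert S V) (Deriv a S))) acts)))"

lemma sHML_char_form: "sHML (char_form acts idx n V S)"
  by (induction n arbitrary: V S) (auto intro!: sHML_conj_list)

lemma guarded_char_form: "guarded (char_form acts idx n V S)"
  by (induction n arbitrary: V S) (auto intro!: guarded_conj_list guarded_var_conj_list)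

lemma fv_char_form: "fv (char_form acts idx n V S) \<subseteq> idx ` V"
proof (induction n arbitrary: V S)
  case (Suc n)
  then show ?case using Suc.IH[of "insert S V"] by auto
qed auto

lemma subset_sem_char_form:
  assumes inj: "inj_on idx Fam" and Deriv_closed: "\<And>a T. T \<in> Fam \<Longrightarrow> Deriv a T \<in> Fam"
  shows "V \<subseteq> Fam \<Longrightarrow> S \<in> Fam \<Longrightarrow> (\<And>T. T \<in> V \<Longrightarrow> T \<subseteq> \<sigma> (idx T))
    \<Longrightarrow> S \<subseteq> sem (char_form acts idx n V S) \<sigma>"
proof (induction n arbitrary: V S \<sigma>)
  case (Suc n)
  show ?case
  proof (cases "S = {} \<or> S \<in> V")
    case False
    let ?\<sigma> = "\<sigma>(idx S := S)"
    have "Deriv a S \<subseteq> sem (char_form acts idx n (insert S V) (Deriv a S)) ?\<sigma>" for a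
      by (rule Suc.IH) (use Suc.prems Deriv_closed in \<open>auto simp: inj_on_eq_iff[OF inj]\<close>)
    then have "S \<subseteq> sem (conj_list (map (\<lambda>a. Box {a} (char_form acts idx n (insert S V) (Deriv a S))) acts)) ?\<sigma>"
      by (auto simp: Deriv_def)
    then show ?thesis using False by (simp add: gfp_upperbound)
  qed (use Suc.prems in auto)
qed auto

lemma sem_char_form_subset_viable:
  assumes fin: "finite Fam" and inj: "inj_on idx Fam"
    and Deriv_closed: "\<And>a T. T \<in> Fam \<Longrightarrow> Deriv a T \<in> Fam"
    and safe: "\<And>T. T \<in> Fam \<Longrightarrow> safety T" and acts: "set acts = UNIV"
  shows "card (Fam - V) \<le> n \<Longrightarrow> V \<subseteq> Fam \<Longrightarrow> S \<in> Fam
    \<Longrightarrow> (\<And>T. T \<in> V \<Longrightarrow> \<sigma> (idx T) \<subseteq> viable k T)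
    \<Longrightarrow> sem (char_form acts idx n V S) \<sigma> \<subseteq> viable k S"
proof (induction k arbitrary: n V S \<sigma>)
  \<comment> \<open>Induction on \<open>k\<close>, not on the fuel: the recursive calls run in an environment that binds
    \<open>idx S\<close> to the fixpoint \<open>G\<close> itself, and the hypothesis for \<open>k\<close> is what bounds \<open>G\<close>.\<close>
  case 0
  then show ?case by (cases n) (auto simp: viable_0 safe)
next
  case (Suc k)
  show ?case
  proof (cases "S = {} \<or> S \<in> V")
    case True
    then show ?thesis using Suc.prems by (cases n) auto
  next
    case False
    have "card (Fam - insert S V) < card (Fam - V)"
      using False Suc.prems(3) fin by (intro psubset_card_mono) auto
    then obtain m where n: "n = Suc m" and m: "card (Fam - insert S V) \<le> m"
      using Suc.prems(1) by (cases n) auto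
    let ?body = "conj_list (map (\<lambda>a. Box {a} (char_form acts idx m (insert S V) (Deriv a S))) acts)"
    have form: "char_form acts idx n V S = Max (idx S) ?body"
      using False n by simp
    define G where "G = sem (Max (idx S) ?body) \<sigma>"
    define \<sigma>' where "\<sigma>' = \<sigma>(idx S := G)"
    have G_viable: "G \<subseteq> viable k S"
      unfolding G_def form[symmetric] by (rule Suc.IH) (use Suc.prems viable_Suc_subset safe in blast)+
    have G_unfold: "G = sem ?body \<sigma>'"
      unfolding G_def \<sigma>'_def by (rule sem_Max_unfold)
    have env: "\<sigma>' (idx T) \<subseteq> viable k T" if "T \<in> insert S V" for T
    proof (cases "T = S")
      case True
      then show ?thesis using G_viable by (simp add: \<sigma>'_def)
    next
      case False
      then have "idx T \<noteq> idx S"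
        using that Suc.prems(2,3) inj_on_eq_iff[OF inj] by blast
      then show ?thesis
        using that False Suc.prems(2,4) viable_Suc_subset safe by (fastforce simp: \<sigma>'_def)
    qed
    have IH: "sem (char_form acts idx m (insert S V) (Deriv a S)) \<sigma>' \<subseteq> viable k (Deriv a S)" for a
      by (rule Suc.IH) (use m Suc.prems Deriv_closed env in auto)
    show ?thesis unfolding form G_def[symmetric]
    proof
      fix g assume "g \<in> G"
      then have g: "g \<in> sem ?body \<sigma>'" using G_unfold by simp
      show "g \<in> viable (Suc k) S"
      proof (rule viable_SucI)
        show "safety S" "S \<noteq> {}" using safe Suc.prems(3) False by auto
        fix a h assume "g = tcons a h"
        then have "h \<in> sem (char_form acts idx m (insert S V) (Deriv a S)) \<sigma>'"
          using g acts by auto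
        then show "h \<in> viable k (Deriv a S)" using IH by blast
      qed
    qed
  qed
qed

theorem safety_sHML_definable:
  fixes S :: "('a::finite) fintr set"
  assumes safe: "safety S" and fin: "finite (range (\<lambda>w. fold Deriv w S))"
  shows "\<exists>\<psi>. sHML \<psi> \<and> closed \<psi> \<and> guarded \<psi> \<and> semF \<psi> = S"
proof -
  define Fam where "Fam = range (\<lambda>w. fold Deriv w S)"
  have S_in: "S \<in> Fam"
    unfolding Fam_def by (rule range_eqI[of _ _ "[]"]) simp
  have Deriv_closed: "Deriv a T \<in> Fam" if "T \<in> Fam" for a T
    using that unfolding Fam_def by (auto intro: range_eqI[of _ _ "_ @ [a]"])
  have safe_Fam: "safety T" if "T \<in> Fam" for T
    using that safe safety_fold_Deriv unfolding Fam_def by blast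
  obtain idx :: "'a fintr set \<Rightarrow> nat" where inj: "inj_on idx Fam"
    using finite_imp_inj_to_nat_seg[OF fin[folded Fam_def]] by blast
  obtain acts :: "'a list" where acts: "set acts = UNIV"
    using finite_list[OF finite_UNIV] by blast
  define \<psi> where "\<psi> = char_form acts idx (card Fam) {} S"
  have "S \<subseteq> sem \<psi> (\<lambda>_. {})"
    unfolding \<psi>_def by (rule subset_sem_char_form[OF inj Deriv_closed]) (use S_in in auto)
  moreover have "sem \<psi> (\<lambda>_. {}) \<subseteq> viable k S" for k
    unfolding \<psi>_def
    by (rule sem_char_form_subset_viable[OF fin[folded Fam_def] inj Deriv_closed safe_Fam acts])
      (use S_in in auto)
  then have "sem \<psi> (\<lambda>_. {}) \<subseteq> S"
    using safety_memI[OF safe] unfolding viable_def by blast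
  moreover have "fv \<psi> = {}"
    using fv_char_form[of acts idx "card Fam" "{}" S] unfolding \<psi>_def by simp
  ultimately show ?thesis
    unfolding semF_def closed_def \<psi>_def using sHML_char_form guarded_char_form by blast
qed

inductive_set lattice_hull :: "'b set set \<Rightarrow> 'b set set" for B where
  base: "x \<in> B \<Longrightarrow> x \<in> lattice_hull B"
| top: "UNIV \<in> lattice_hull B"
| bot: "{} \<in> lattice_hull B"
| union: "x \<in> lattice_hull B \<Longrightarrow> y \<in> lattice_hull B \<Longrightarrow> x \<union> y \<in> lattice_hull B"
| inter: "x \<in> lattice_hull B \<Longrightarrow> y \<in> lattice_hull B \<Longrightarrow> x \<inter> y \<in> lattice_hull B"

lemma finite_lattice_hull:
  assumes "finite B"
  shows "finite (lattice_hull B)"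
proof -
  define sig where "sig z = {b \<in> B. z \<in> b}" for z
  have saturated: "z' \<in> x" if "x \<in> lattice_hull B" "z \<in> x" "sig z = sig z'" for x z z'
    using that by (induction arbitrary: z z' rule: lattice_hull.induct) (auto simp: sig_def)
  have "x \<in> (\<lambda>Q. sig -` Q) ` Pow (Pow B)" if "x \<in> lattice_hull B" for x
  proof
    show "x = sig -` sig ` x" using saturated[OF that] by blast
    show "sig ` x \<in> Pow (Pow B)" by (auto simp: sig_def)
  qed
  then show ?thesis
    using assms by (meson finite_Pow_iff finite_imageI finite_subset subsetI)
qed

lemma lattice_hull_Deriv:
  assumes "\<And>x. x \<in> B \<Longrightarrow> Deriv a x \<in> lattice_hull B" and "x \<in> lattice_hull B"
  shows "Deriv a x \<in> lattice_hull B"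
  using assms(2) by induction (auto intro: assms(1) lattice_hull.intros)

type_synonym 'a env = "nat \<Rightarrow> 'a fintr set"

text \<open>The pairs of a subformula of \<open>p\<close> and the environment in which it is evaluated when
evaluating \<open>p\<close> in \<open>\<rho>\<close>, every fixpoint variable being bound to the value of its fixpoint.\<close>

primrec instances :: "'a form \<Rightarrow> 'a env \<Rightarrow> ('a form \<times> 'a env) set" where
  "instances TT \<rho> = {(TT, \<rho>)}"
| "instances FF \<rho> = {(FF, \<rho>)}"
| "instances (Or p q) \<rho> = insert (Or p q, \<rho>) (instances p \<rho> \<union> instances q \<rho>)"
| "instances (And p q) \<rho> = insert (And p q, \<rho>) (instances p \<rho> \<union> instances q \<rho>)"
| "instances (Dia A p) \<rho> = insert (Dia A p, \<rho>) (instances p \<rho>)"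
| "instances (Box A p) \<rho> = insert (Box A p, \<rho>) (instances p \<rho>)"
| "instances (Min X p) \<rho> = insert (Min X p, \<rho>) (instances p (\<rho>(X := sem (Min X p) \<rho>)))"
| "instances (Max X p) \<rho> = insert (Max X p, \<rho>) (instances p (\<rho>(X := sem (Max X p) \<rho>)))"
| "instances (Var X) \<rho> = {(Var X, \<rho>)}"

lemma instances_self: "(p, \<rho>) \<in> instances p \<rho>"
  by (cases p) auto

lemma finite_instances: "finite (instances p \<rho>)"
  by (induction p arbitrary: \<rho>) auto

lemma instances_Box_body: "(Box A q, \<tau>) \<in> instances p \<rho> \<Longrightarrow> (q, \<tau>) \<in> instances p \<rho>"
  by (induction p arbitrary: \<rho>) (auto simp: instances_self)

primrec unguarded_vars :: "'a form \<Rightarrow> nat set" where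
  "unguarded_vars TT = {}" | "unguarded_vars FF = {}"
| "unguarded_vars (Or p q) = unguarded_vars p \<union> unguarded_vars q"
| "unguarded_vars (And p q) = unguarded_vars p \<union> unguarded_vars q"
| "unguarded_vars (Dia A p) = {}" | "unguarded_vars (Box A p) = {}"
| "unguarded_vars (Min X p) = unguarded_vars p - {X}"
| "unguarded_vars (Max X p) = unguarded_vars p - {X}"
| "unguarded_vars (Var X) = {X}"

lemma unguarded_vars_subset_fv: "unguarded_vars p \<subseteq> fv p"
  by (induction p) auto

lemma guarded_var_imp_notin_unguarded_vars: "guarded_var X p \<Longrightarrow> X \<notin> unguarded_vars p"
  by (induction p) auto

definition box_sems :: "('a form \<times> 'a env) set \<Rightarrow> 'a fintr set set" where
  "box_sems I = {sem (Box A q) \<tau> | A q \<tau>. (Box A q, \<tau>) \<in> I}"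

lemma finite_box_sems: "finite I \<Longrightarrow> finite (box_sems I)"
proof -
  assume "finite I"
  moreover have "box_sems I \<subseteq> (\<lambda>(q, \<tau>). sem q \<tau>) ` I"
    unfolding box_sems_def by (auto simp del: sem.simps intro: rev_image_eqI)
  ultimately show ?thesis by (meson finite_imageI finite_subset)
qed

text \<open>Guardedness makes the \<open>Max\<close> case work: the recursion variable occurs only under
boxes, so its value need not already be known to lie in the lattice.\<close>

lemma sem_mem_lattice_hull:
  "sHML_F p \<Longrightarrow> guarded p \<Longrightarrow> instances p \<rho> \<subseteq> I
   \<Longrightarrow> (\<And>Y. Y \<in> unguarded_vars p \<Longrightarrow> \<rho> Y \<in> lattice_hull (box_sems I))
   \<Longrightarrow> sem p \<rho> \<in> lattice_hull (box_sems I)"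
proof (induction p arbitrary: \<rho>)
  case (Or p q)
  have "sem p \<rho> \<in> lattice_hull (box_sems I)" "sem q \<rho> \<in> lattice_hull (box_sems I)"
    by (rule Or.IH; use Or.prems in auto)+
  then show ?case by (simp add: lattice_hull.union)
next
  case (And p q)
  have "sem p \<rho> \<in> lattice_hull (box_sems I)" "sem q \<rho> \<in> lattice_hull (box_sems I)"
    by (rule And.IH; use And.prems in auto)+
  then show ?case by (simp add: lattice_hull.inter)
next
  case (Box A p)
  then have "sem (Box A p) \<rho> \<in> box_sems I"
    unfolding box_sems_def by auto
  then show ?case by (rule lattice_hull.base)
next
  case (Max X p)
  let ?\<rho> = "\<rho>(X := sem (Max X p) \<rho>)"
  have "sem p ?\<rho> \<in> lattice_hull (box_sems I)"
  proof (rule Max.IH[of ?\<rho>])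
    show "instances p ?\<rho> \<subseteq> I" using Max.prems(3) by simp
    show "?\<rho> Y \<in> lattice_hull (box_sems I)" if "Y \<in> unguarded_vars p" for Y
    proof -
      have "Y \<noteq> X"
        using that Max.prems(2) guarded_var_imp_notin_unguarded_vars by auto
      then show ?thesis using that Max.prems(4) by simp
    qed
  qed (use Max.prems in simp_all)
  then show ?case by (subst sem_Max_unfold) simp
qed (simp_all add: lattice_hull.top lattice_hull.bot)

lemma instances_sem_mem_lattice_hull:
  "sHML_F p \<Longrightarrow> guarded p \<Longrightarrow> instances p \<rho> \<subseteq> I
   \<Longrightarrow> (\<And>Y. Y \<in> fv p \<Longrightarrow> \<rho> Y \<in> lattice_hull (box_sems I)) \<Longrightarrow> (q, \<tau>) \<in> instances p \<rho>
   \<Longrightarrow> sem q \<tau> \<in> lattice_hull (box_sems I)"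
proof (induction p arbitrary: \<rho>)
  case (Or p1 p2)
  have "sem (Or p1 p2) \<rho> \<in> lattice_hull (box_sems I)"
    by (rule sem_mem_lattice_hull) (use Or.prems unguarded_vars_subset_fv in auto)
  moreover have "sem q \<tau> \<in> lattice_hull (box_sems I)" if "(q, \<tau>) \<in> instances p1 \<rho>"
    by (rule Or.IH(1)) (use Or.prems that in auto)
  moreover have "sem q \<tau> \<in> lattice_hull (box_sems I)" if "(q, \<tau>) \<in> instances p2 \<rho>"
    by (rule Or.IH(2)) (use Or.prems that in auto)
  ultimately show ?case using Or.prems(5) by auto
next
  case (And p1 p2)
  have "sem (And p1 p2) \<rho> \<in> lattice_hull (box_sems I)"
    by (rule sem_mem_lattice_hull) (use And.prems unguarded_vars_subset_fv in auto)
  moreover have "sem q \<tau> \<in> lattice_hull (box_sems I)" if "(q, \<tau>) \<in> instances p1 \<rho>"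
    by (rule And.IH(1)) (use And.prems that in auto)
  moreover have "sem q \<tau> \<in> lattice_hull (box_sems I)" if "(q, \<tau>) \<in> instances p2 \<rho>"
    by (rule And.IH(2)) (use And.prems that in auto)
  ultimately show ?case using And.prems(5) by auto
next
  case (Box A p)
  have "sem (Box A p) \<rho> \<in> lattice_hull (box_sems I)"
    by (rule sem_mem_lattice_hull) (use Box.prems in auto)
  moreover have "sem q \<tau> \<in> lattice_hull (box_sems I)" if "(q, \<tau>) \<in> instances p \<rho>"
    by (rule Box.IH) (use Box.prems that in auto)
  ultimately show ?case using Box.prems(5) by auto
next
  case (Max X p)
  let ?\<rho> = "\<rho>(X := sem (Max X p) \<rho>)"
  have M: "sem (Max X p) \<rho> \<in> lattice_hull (box_sems I)"
    by (rule sem_mem_lattice_hull) (use Max.prems unguarded_vars_subset_fv in auto)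
  moreover have "sem q \<tau> \<in> lattice_hull (box_sems I)" if "(q, \<tau>) \<in> instances p ?\<rho>"
  proof (rule Max.IH[of ?\<rho>])
    show "instances p ?\<rho> \<subseteq> I" using Max.prems(3) by simp
    show "?\<rho> Y \<in> lattice_hull (box_sems I)" if "Y \<in> fv p" for Y
      using that Max.prems(4) M by auto
    show "(q, \<tau>) \<in> instances p ?\<rho>" by (rule that)
  qed (use Max.prems in simp_all)
  ultimately show ?case using Max.prems(5) by auto
qed (auto intro: lattice_hull.intros)

lemma finite_fold_Deriv_semF:
  assumes "sHML_F \<phi>" "guarded \<phi>" "closed \<phi>"
  shows "finite (range (\<lambda>w. fold Deriv w (semF \<phi>)))"
proof -
  define I where "I = instances \<phi> (\<lambda>_. {})"
  define L where "L = lattice_hull (box_sems I)"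
  have sem_mem: "sem q \<tau> \<in> L" if "(q, \<tau>) \<in> I" for q \<tau>
    unfolding L_def
    by (rule instances_sem_mem_lattice_hull[of \<phi>]) (use assms that in \<open>auto simp: I_def closed_def\<close>)
  have Deriv_closed: "Deriv a T \<in> L" if "T \<in> L" for a T
    unfolding L_def
  proof (rule lattice_hull_Deriv[OF _ that[unfolded L_def]])
    fix x assume "x \<in> box_sems I"
    then obtain A q \<tau> where box: "(Box A q, \<tau>) \<in> I" and x: "x = sem (Box A q) \<tau>"
      unfolding box_sems_def by blast
    have "sem q \<tau> \<in> L"
      using sem_mem instances_Box_body[OF box[unfolded I_def]] unfolding I_def by blast
    then show "Deriv a x \<in> lattice_hull (box_sems I)"
      unfolding x by (simp add: Deriv_box L_def lattice_hull.top)
  qed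
  have "fold Deriv w S \<in> L" if "S \<in> L" for w S
    using that by (induction w arbitrary: S) (auto intro: Deriv_closed)
  moreover have "semF \<phi> \<in> L"
    unfolding semF_def using sem_mem instances_self I_def by blast
  moreover have "finite L"
    unfolding L_def I_def by (intro finite_lattice_hull finite_box_sems finite_instances)
  ultimately show ?thesis
    by (meson finite_subset image_subsetI rangeE)
qed

lemma gfp_compl: "gfp (\<lambda>S. - f (- S)) = - lfp (f :: 'b set \<Rightarrow> 'b set)"
proof -
  have "{S. S \<subseteq> - f (- S)} = uminus ` {S. f S \<subseteq> S}"
    by (rule set_eqI) (metis (mono_tags, lifting) compl_le_swap1 double_compl image_iff mem_Collect_eq)
  then show ?thesis
    unfolding gfp_def lfp_def by (simp add: uminus_Inf)
qed

lemma lfp_compl: "lfp (\<lambda>S. - f (- S)) = - gfp (f :: 'b set \<Rightarrow> 'b set)"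
  using gfp_compl[of "\<lambda>S. - f (- S)"] by simp

primrec dual :: "'a form \<Rightarrow> 'a form" where
  "dual TT = FF" | "dual FF = TT"
| "dual (Or p q) = And (dual p) (dual q)" | "dual (And p q) = Or (dual p) (dual q)"
| "dual (Dia A p) = Box A (dual p)" | "dual (Box A p) = Dia A (dual p)"
| "dual (Min X p) = Max X (dual p)" | "dual (Max X p) = Min X (dual p)"
| "dual (Var X) = Var X"

lemma sem_dual: "sem (dual p) \<sigma> = - sem p (\<lambda>X. - \<sigma> X)"
proof (induction p arbitrary: \<sigma>)
  case (Min X p)
  have "(\<lambda>Y. - (\<sigma>(X := S)) Y) = (\<lambda>Y. - \<sigma> Y)(X := - S)" for S
    by (rule ext) simp
  then show ?case
    using gfp_compl[of "\<lambda>S. sem p ((\<lambda>Y. - \<sigma> Y)(X := S))"] Min.IH by simp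
next
  case (Max X p)
  have "(\<lambda>Y. - (\<sigma>(X := S)) Y) = (\<lambda>Y. - \<sigma> Y)(X := - S)" for S
    by (rule ext) simp
  then show ?case
    using lfp_compl[of "\<lambda>S. sem p ((\<lambda>Y. - \<sigma> Y)(X := S))"] Max.IH by simp
qed auto

lemma fv_dual [simp]: "fv (dual p) = fv p"
  by (induction p) auto

lemma guarded_dual [simp]: "guarded (dual p) = guarded p"
proof -
  have "guarded_var X (dual q) = guarded_var X q" for X and q :: "'b form"
    by (induction q) auto
  then show ?thesis by (induction p) auto
qed

lemma sHML_F_dual: "cHML_F p \<Longrightarrow> sHML_F (dual p)"
  by (induction p) auto

lemma cHML_dual: "sHML p \<Longrightarrow> cHML (dual p)"
  by (induction p) auto

lemma semF_dual: "closed p \<Longrightarrow> semF (dual p) = - semF p"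
  unfolding semF_def closed_def by (simp add: sem_dual) (rule sem_fv_cong, simp)

lemma sHML_F_expressible:
  fixes \<phi> :: "('a::finite) form"
  assumes "sHML_F \<phi>" "closed \<phi>" "guarded \<phi>"
  shows "\<exists>\<psi>. sHML \<psi> \<and> closed \<psi> \<and> guarded \<psi> \<and> semF \<psi> = semF \<phi>"
  using assms by (intro safety_sHML_definable finite_fold_Deriv_semF)
    (simp_all add: semF_def sem_safety safety_empty)

theorem mainTheorem14:
  fixes \<phi> :: "('a::finite) form"
  assumes "closed \<phi>" and "guarded \<phi>"
  shows "(sHML_F \<phi> \<longrightarrow> (\<exists>\<psi>. sHML \<psi> \<and> closed \<psi> \<and> guarded \<psi> \<and> semF \<psi> = semF \<phi>))
       \<and> (cHML_F \<phi> \<longrightarrow> (\<exists>\<psi>. cHML \<psi> \<and> closed \<psi> \<and> guarded \<psi> \<and> semF \<psi> = semF \<phi>))"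
proof (intro conjI impI)
  assume "sHML_F \<phi>"
  then show "\<exists>\<psi>. sHML \<psi> \<and> closed \<psi> \<and> guarded \<psi> \<and> semF \<psi> = semF \<phi>"
    using sHML_F_expressible assms by blast
next
  assume "cHML_F \<phi>"
  then obtain \<psi> where \<psi>: "sHML \<psi>" "closed \<psi>" "guarded \<psi>" "semF \<psi> = semF (dual \<phi>)"
    using sHML_F_expressible[of "dual \<phi>"] sHML_F_dual assms by (auto simp: closed_def)
  have "semF (dual \<psi>) = semF \<phi>"
    using \<psi> assms(1) by (simp add: semF_dual)
  with \<psi> show "\<exists>\<psi>. cHML \<psi> \<and> closed \<psi> \<and> guarded \<psi> \<and> semF \<psi> = semF \<phi>"
    by (intro exI[of _ "dual \<psi>"]) (simp add: cHML_dual closed_def)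
qed

end
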